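(* Let $X$ be a nontrivial real Banach space. Then $X$ has the diameter $2$ property if and only if $X^*$ is weakly octahedral.
   Context: $X$ has the diameter $2$ property if every nonempty relatively weakly open subset of the closed unit ball $B_X$ has diameter $2$. A Banach space $Z$ is weakly octahedral if for every finite-dimensional subspace $E$ of $Z$, every $z^*\in B_{Z^*}$, and every $\varepsilon>0$, there is a $y\in S_Z$ (unit sphere) such that $\|z+y\|\geq(1-\varepsilon)(|z^*(z)|+\|y\|)$ for all $z\in E$. *)

theory Defs
  imports "HOL-Analysis.Analysis"
begin

definition weak_topology :: "'a::real_normed_vector topology" where
  "weak_topology = topology_generated_by {{x. blinfun_apply (f::'a \<Rightarrow>\<^sub>L real) x \<in> U} | f U. open U}"

definition diameter_two_property :: "'a::real_normed_vector itself \<Rightarrow> bool" where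
  "diameter_two_property (_::'a itself) \<longleftrightarrow>
     (\<forall>W::'a set. openin (subtopology weak_topology (cball 0 1)) W \<and> W \<noteq> {} \<longrightarrow> diameter W = 2)"

definition weakly_octahedral :: "'z::real_normed_vector itself \<Rightarrow> bool" where
  "weakly_octahedral _ \<longleftrightarrow>
     (\<forall>F::'z set. finite F \<longrightarrow>
       (\<forall>zs::'z \<Rightarrow>\<^sub>L real. norm zs \<le> 1 \<longrightarrow>
         (\<forall>\<epsilon>>0. \<exists>y::'z. norm y = 1 \<and>
            (\<forall>z\<in>span F. norm (z + y) \<ge> (1 - \<epsilon>) * (\<bar>blinfun_apply zs z\<bar> + norm y)))))"

end

theory Submission
  imports Defs "HOL-Library.Function_Algebras"
begin

text \<open>
  Both directions rest on Helly's lemma: given finitely many functionals \<open>f \<in> I\<close> on \<open>X\<close> and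
  values \<open>w f\<close> with \<open>\<Sum> c f * w f \<le> \<parallel>\<Sum> c f *\<^sub>R f\<parallel>\<close> for all coefficients \<open>c\<close>, some point of
  the unit ball of \<open>X\<close> attains all values \<open>w f\<close> up to any \<open>\<eta> > 0\<close>. It follows from the
  Hahn--Banach theorem applied to a gauge on value vectors.

  If \<open>X\<^sup>*\<close> is weakly octahedral, test the definition against evaluation at a point \<open>x\<close> of a weak
  neighbourhood \<open>W\<close> in the unit ball: the resulting norm-one \<open>y\<close> satisfies
  \<open>\<parallel>d y + g\<parallel> \<ge> \<bar>d\<bar> t + \<bar>g x\<bar>\<close> for all \<open>g\<close> in the span of the finitely many functionals defining
  \<open>W\<close>, with \<open>t\<close> close to 1. This is exactly Helly's condition for the values \<open>g x\<close> together
  with \<open>\<plusminus>t\<close> at \<open>y\<close>, so \<open>W\<close> contains points \<open>u, v\<close> with \<open>y u \<approx> 1\<close>, \<open>y v \<approx> -1\<close>.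

  Conversely, for \<open>z\<^sup>*\<^sup>*\<close> in the unit ball of the bidual and a finite-dimensional \<open>E \<subseteq> X\<^sup>*\<close>,
  Helly's lemma makes the weak neighbourhood \<open>W\<close> where a basis of \<open>E\<close> nearly takes the values of
  \<open>z\<^sup>*\<^sup>*\<close> nonempty. Points \<open>x\<^sub>1, x\<^sub>2 \<in> W\<close> at distance nearly 2 and a functional \<open>y\<close> norming
  \<open>x\<^sub>1 - x\<^sub>2\<close> then give \<open>\<parallel>z + y\<parallel> \<ge> \<bar>z\<^sup>*\<^sup>* z\<bar> + 1 - \<epsilon>\<close> for \<open>z \<in> E\<close> of bounded norm (norm
  equivalence on \<open>E\<close> keeps \<open>z x\<^sub>i\<close> close to \<open>z\<^sup>*\<^sup>* z\<close>); large \<open>z\<close> are handled by the triangle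
  inequality.
\<close>

section \<open>The Hahn--Banach theorem\<close>

definition sublinear :: "('v::real_vector \<Rightarrow> real) \<Rightarrow> bool" where
  "sublinear p \<longleftrightarrow> (\<forall>x y. p (x + y) \<le> p x + p y) \<and> (\<forall>a x. a \<ge> 0 \<longrightarrow> p (a *\<^sub>R x) = a * p x)"

lemma sublinear_add: "sublinear p \<Longrightarrow> p (x + y) \<le> p x + p y"
  by (simp add: sublinear_def)

lemma sublinear_scaleR: "sublinear p \<Longrightarrow> a \<ge> 0 \<Longrightarrow> p (a *\<^sub>R x) = a * p x"
  by (simp add: sublinear_def)

lemma sublinear_zero: "sublinear p \<Longrightarrow> p 0 = 0"
  using sublinear_scaleR[of p 0 0] by simp

lemma sublinear_minus: "sublinear p \<Longrightarrow> - p x \<le> p (- x)"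
  using sublinear_add[of p x "- x"] sublinear_zero[of p] by simp

lemma sublinear_scaleR_ge:
  assumes p: "sublinear p"
  shows "a * p x \<le> p (a *\<^sub>R x)"
proof (cases "a \<ge> 0")
  case False
  have "a * p x = (- a) * - p x" by simp
  also have "\<dots> \<le> (- a) * p (- x)" using False sublinear_minus[OF p] by (intro mult_left_mono) auto
  also have "\<dots> = p (a *\<^sub>R x)" using False sublinear_scaleR[OF p, of "- a" "- x"] by simp
  finally show ?thesis .
qed (simp add: sublinear_scaleR[OF p])

text \<open>Partial linear functionals are represented by their graphs, so that Zorn's lemma applies
  to sets ordered by inclusion.\<close>
definition dominated_linear_graph :: "('v::real_vector \<Rightarrow> real) \<Rightarrow> 'v \<Rightarrow> ('v \<times> real) set \<Rightarrow> bool" where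
  "dominated_linear_graph p w G \<longleftrightarrow>
     subspace G \<and> single_valued G \<and> (\<forall>(x, a)\<in>G. a \<le> p x) \<and> (w, p w) \<in> G"

lemma single_valued_subspace_iff:
  assumes "subspace (G :: ('v::real_vector \<times> real) set)"
  shows "single_valued G \<longleftrightarrow> (\<forall>a. (0, a) \<in> G \<longrightarrow> a = 0)"
proof
  assume "single_valued G"
  moreover have "(0, 0) \<in> G" using subspace_0[OF assms] by (simp add: zero_prod_def)
  ultimately show "\<forall>a. (0, a) \<in> G \<longrightarrow> a = 0" by (auto dest: single_valuedD)
next
  assume zero: "\<forall>a. (0, a) \<in> G \<longrightarrow> a = 0"
  show "single_valued G"
  proof (rule single_valuedI)
    fix x a b assume "(x, a) \<in> G" "(x, b) \<in> G"
    then have "(x, a) - (x, b) \<in> G" by (rule subspace_diff[OF assms])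
    then have "(0, a - b) \<in> G" by simp
    then have "a - b = 0" using zero by blast
    then show "a = b" by simp
  qed
qed

lemma dominated_linear_graph_Union_chain:
  assumes "C \<noteq> {}" "subset.chain {G. dominated_linear_graph p w G} C"
  shows "dominated_linear_graph p w (\<Union>C)"
proof -
  have good: "dominated_linear_graph p w G" if "G \<in> C" for G
    using assms(2) that by (auto simp: subset.chain_def)
  have pair: "\<exists>G\<in>C. u \<in> G \<and> v \<in> G" if "u \<in> \<Union>C" "v \<in> \<Union>C" for u v
    using that assms(2) unfolding subset.chain_def by blast
  obtain G0 where "G0 \<in> C" using assms(1) by blast
  have "subspace (\<Union>C)"
    unfolding subspace_def
  proof (intro conjI ballI allI)
    show "0 \<in> \<Union>C" using good[OF \<open>G0 \<in> C\<close>] \<open>G0 \<in> C\<close> subspace_0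
      unfolding dominated_linear_graph_def by blast
  next
    fix u v assume "u \<in> \<Union>C" "v \<in> \<Union>C"
    then obtain G where "G \<in> C" "u \<in> G" "v \<in> G" using pair by blast
    then show "u + v \<in> \<Union>C" using good[of G] subspace_add unfolding dominated_linear_graph_def by blast
  next
    fix r u assume "u \<in> \<Union>C"
    then show "r *\<^sub>R u \<in> \<Union>C" using good subspace_scale unfolding dominated_linear_graph_def by blast
  qed
  moreover have "single_valued (\<Union>C)"
  proof (rule single_valuedI)
    fix x a b assume "(x, a) \<in> \<Union>C" "(x, b) \<in> \<Union>C"
    then obtain G where "G \<in> C" "(x, a) \<in> G" "(x, b) \<in> G" using pair by blast
    then show "a = b" using good by (auto simp: dominated_linear_graph_def dest: single_valuedD)
  qed
  moreover have "a \<le> p x" if "(x, a) \<in> \<Union>C" for x a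
    using that good unfolding dominated_linear_graph_def by blast
  moreover have "(w, p w) \<in> \<Union>C"
    using good[OF \<open>G0 \<in> C\<close>] \<open>G0 \<in> C\<close> unfolding dominated_linear_graph_def by blast
  ultimately show ?thesis unfolding dominated_linear_graph_def by blast
qed

lemma dominated_extension_constant:
  assumes p: "sublinear p" and G: "dominated_linear_graph p w G"
  obtains c where "\<And>x a y b. (x, a) \<in> G \<Longrightarrow> (y, b) \<in> G \<Longrightarrow> a - p (x - z) \<le> c \<and> c \<le> p (y + z) - b"
proof -
  have sub: "subspace G" and dom: "\<And>x a. (x, a) \<in> G \<Longrightarrow> a \<le> p x"
    using G by (auto simp: dominated_linear_graph_def)
  define L where "L = {a - p (x - z) | x a. (x, a) \<in> G}"
  have bound: "l \<le> p (y + z) - b" if "l \<in> L" "(y, b) \<in> G" for l y b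
  proof -
    from that obtain x a where xa: "(x, a) \<in> G" "l = a - p (x - z)" unfolding L_def by auto
    have "a + b \<le> p (x + y)" using dom subspace_add[OF sub xa(1) \<open>(y, b) \<in> G\<close>] by simp
    also have "\<dots> \<le> p (x - z) + p (y + z)" using sublinear_add[OF p, of "x - z" "y + z"] by simp
    finally show ?thesis using xa by linarith
  qed
  have "(0, 0) \<in> G" using subspace_0[OF sub] by (simp add: zero_prod_def)
  then have "L \<noteq> {}" "bdd_above L" using bound unfolding L_def bdd_above_def by blast+
  then show thesis
    by (intro that[of "Sup L"] conjI cSup_upper cSup_least bound) (auto simp: L_def)
qed

lemma dominated_extension_below:
  assumes p: "sublinear p" and sub: "subspace G" and dom: "\<And>x a. (x, a) \<in> G \<Longrightarrow> a \<le> p x"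
    and c: "\<And>x a y b. (x, a) \<in> G \<Longrightarrow> (y, b) \<in> G \<Longrightarrow> a - p (x - z) \<le> c \<and> c \<le> p (y + z) - b"
    and yb: "(y, b) \<in> G"
  shows "b + t * c \<le> p (y + t *\<^sub>R z)"
proof (cases t "0::real" rule: linorder_cases)
  case greater
  have "inverse t *\<^sub>R (y, b) \<in> G" by (rule subspace_scale[OF sub yb])
  then have "c \<le> p (inverse t *\<^sub>R y + z) - inverse t * b" using c yb by simp
  then have "t * (inverse t * b + c) \<le> t * p (inverse t *\<^sub>R y + z)"
    using greater by (intro mult_left_mono) auto
  also have "\<dots> = p (y + t *\<^sub>R z)"
    using sublinear_scaleR[OF p, of t "inverse t *\<^sub>R y + z"] greater by (simp add: scaleR_add_right)
  moreover have "t * (inverse t * b) = b" using greater by simp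
  ultimately show ?thesis by (simp add: distrib_left)
next
  case less
  have "(- inverse t) *\<^sub>R (y, b) \<in> G" by (rule subspace_scale[OF sub yb])
  then have "- inverse t * b - p (- inverse t *\<^sub>R y - z) \<le> c" using c yb by simp
  then have "(- t) * (- inverse t * b - c) \<le> (- t) * p (- inverse t *\<^sub>R y - z)"
    using less by (intro mult_left_mono) auto
  also have "\<dots> = p (y + t *\<^sub>R z)"
    using sublinear_scaleR[OF p, of "- t" "- inverse t *\<^sub>R y - z"] less by (simp add: scaleR_diff_right)
  finally show ?thesis using less by (simp add: algebra_simps)
qed (use dom yb in simp)

lemma dominated_linear_graph_extend:
  assumes p: "sublinear p" and G: "dominated_linear_graph p w G" and z: "z \<notin> Domain G"
  shows "\<exists>H. dominated_linear_graph p w H \<and> G \<subset> H"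
proof -
  have sub: "subspace G" and sv: "single_valued G" and dom: "\<And>x a. (x, a) \<in> G \<Longrightarrow> a \<le> p x"
    and wG: "(w, p w) \<in> G"
    using G by (auto simp: dominated_linear_graph_def)
  obtain c where c: "\<And>x a y b. (x, a) \<in> G \<Longrightarrow> (y, b) \<in> G \<Longrightarrow> a - p (x - z) \<le> c \<and> c \<le> p (y + z) - b"
    using dominated_extension_constant[OF p G] by blast
  define H where "H = span (insert (z, c) G)"
  have H: "u \<in> H \<longleftrightarrow> (\<exists>t. u - t *\<^sub>R (z, c) \<in> G)" for u
    unfolding H_def span_insert[of "(z, c)" G] span_eq_iff[THEN iffD2, OF sub] by simp
  have zero: "a = 0" if a: "(0, a) \<in> H" for a
  proof -
    obtain t where "(0, a) - t *\<^sub>R (z, c) \<in> G" using H[THEN iffD1, OF a] by blast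
    then have t: "(- t *\<^sub>R z, a - t * c) \<in> G" by simp
    have "t = 0"
    proof (rule ccontr)
      assume "t \<noteq> 0"
      have "(- inverse t) *\<^sub>R (- t *\<^sub>R z, a - t * c) \<in> G" by (rule subspace_scale[OF sub t])
      then have "(z, - inverse t * (a - t * c)) \<in> G" using \<open>t \<noteq> 0\<close> by simp
      then show False using z by (auto intro: DomainI)
    qed
    then show "a = 0" using t sv single_valued_subspace_iff[OF sub] by simp
  qed
  have below: "b + t * c \<le> p (y + t *\<^sub>R z)" if "(y, b) \<in> G" for y b t
    using dominated_extension_below[OF p sub dom c that] .
  have "dominated_linear_graph p w H"
    unfolding dominated_linear_graph_def
  proof (intro conjI ballI)
    show "subspace H" by (simp add: H_def subspace_span)
    then show "single_valued H" using zero single_valued_subspace_iff by blast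
    show "(w, p w) \<in> H" using wG by (simp add: H_def span_base)
  next
    fix u assume "u \<in> H"
    then obtain t where "u - t *\<^sub>R (z, c) \<in> G" using H by blast
    then show "case u of (x, a) \<Rightarrow> a \<le> p x"
      using below[of "fst u - t *\<^sub>R z" "snd u - t * c" t] by (cases u) simp
  qed
  moreover have "G \<subseteq> H" using span_superset[of "insert (z, c) G"] by (auto simp: H_def)
  moreover have "(z, c) \<in> H" "(z, c) \<notin> G" using z by (auto simp: H_def span_base)
  ultimately show ?thesis by blast
qed

theorem sublinear_supporting_linear:
  assumes p: "sublinear (p :: 'v::real_vector \<Rightarrow> real)"
  obtains f where "linear f" "\<And>x. f x \<le> p x" "f w = p w"
proof -
  let ?A = "{G. dominated_linear_graph p w G}"
  have "span {(w, p w)} \<in> ?A"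
    unfolding dominated_linear_graph_def
  proof (intro CollectI conjI ballI)
    have "a = 0" if "(0, a) \<in> span {(w, p w)}" for a
      using that sublinear_zero[OF p] by (auto simp: span_singleton)
    then show "single_valued (span {(w, p w)})"
      by (simp add: single_valued_subspace_iff subspace_span)
  next
    fix u assume "u \<in> span {(w, p w)}"
    then show "case u of (x, a) \<Rightarrow> a \<le> p x"
      using sublinear_scaleR_ge[OF p] by (auto simp: span_singleton)
  qed (auto simp: span_base)
  then have "\<exists>M\<in>?A. \<forall>X\<in>?A. M \<subseteq> X \<longrightarrow> X = M"
    by (intro subset_Zorn_nonempty) (auto intro: dominated_linear_graph_Union_chain)
  then obtain M where M: "dominated_linear_graph p w M"
    and max: "\<And>X. dominated_linear_graph p w X \<Longrightarrow> M \<subseteq> X \<Longrightarrow> X = M"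
    by blast
  have sub: "subspace M" and sv: "single_valued M"
    using M by (auto simp: dominated_linear_graph_def)
  define f where "f x = (THE a. (x, a) \<in> M)" for x
  have graph: "(x, a) \<in> M \<longleftrightarrow> a = f x" for x a
  proof -
    have "x \<in> Domain M"
    proof (rule ccontr)
      assume "x \<notin> Domain M"
      then obtain H where "dominated_linear_graph p w H" "M \<subset> H"
        using dominated_linear_graph_extend[OF p M] by blast
      then show False using max by blast
    qed
    then obtain b where b: "(x, b) \<in> M" by blast
    then have "f x = b" unfolding f_def using sv by (blast intro: the_equality dest: single_valuedD)
    then show ?thesis using b sv by (auto dest: single_valuedD)
  qed
  have "linear f"
  proof (rule linearI)
    show "f (x + y) = f x + f y" for x y
      using subspace_add[OF sub, of "(x, f x)" "(y, f y)"] graph by simp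
    show "f (r *\<^sub>R x) = r *\<^sub>R f x" for r x
      using subspace_scale[OF sub, of "(x, f x)" r] graph by simp
  qed
  moreover have "f x \<le> p x" for x
    using M graph[of x "f x"] by (auto simp: dominated_linear_graph_def)
  moreover have "f w = p w" using M graph by (simp add: dominated_linear_graph_def)
  ultimately show thesis by (rule that)
qed

lemma exists_norming_functional:
  fixes x :: "'a::real_normed_vector"
  obtains f :: "'a \<Rightarrow>\<^sub>L real" where "norm f \<le> 1" "f x = norm x"
proof -
  have "sublinear (norm :: 'a \<Rightarrow> real)"
    by (auto simp: sublinear_def norm_triangle_ineq)
  then obtain \<psi> where lin: "linear \<psi>" and le: "\<And>v. \<psi> v \<le> norm v" and "\<psi> x = norm x"
    using sublinear_supporting_linear[where w = x] by blast
  have abs_le: "\<bar>\<psi> v\<bar> \<le> norm v" for v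
    using le[of v] le[of "- v"] linear_neg[OF lin, of v] by auto
  then have "bounded_linear \<psi>"
    using lin by (intro bounded_linear_intro[where K = 1]) (auto simp: linear_add linear_scale)
  then show thesis
    using abs_le \<open>\<psi> x = norm x\<close>
    by (intro that[of "Blinfun \<psi>"] norm_blinfun_bound) (auto simp: bounded_linear_Blinfun_apply)
qed

section \<open>Helly's lemma\<close>

instantiation "fun" :: (type, real_vector) real_vector
begin
definition scaleR_fun :: "real \<Rightarrow> ('a \<Rightarrow> 'b) \<Rightarrow> 'a \<Rightarrow> 'b" where
  "scaleR_fun r f = (\<lambda>x. r *\<^sub>R f x)"
instance by standard (auto simp: scaleR_fun_def fun_eq_iff algebra_simps)
end

lemma scaleR_fun_apply [simp]: "(r *\<^sub>R f) x = r *\<^sub>R f x"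
  by (simp add: scaleR_fun_def)

lemma sum_fun_apply: "(\<Sum>i\<in>I. F i) x = (\<Sum>i\<in>I. F i x)"
  by (induction I rule: infinite_finite_induct) auto

text \<open>\<open>helly_gauge I \<kappa>\<close> is the Minkowski gauge of the vectors of values \<open>f x\<close>, \<open>f \<in> I\<close>, of points
  \<open>x\<close> of the unit ball, thickened by the summed errors weighted with \<open>1/\<kappa>\<close>.\<close>
definition helly_cost :: "('a::real_normed_vector \<Rightarrow>\<^sub>L real) set \<Rightarrow> real \<Rightarrow> (('a \<Rightarrow>\<^sub>L real) \<Rightarrow> real) \<Rightarrow> 'a \<Rightarrow> real"
  where "helly_cost I \<kappa> v x = norm x + (\<Sum>f\<in>I. \<bar>v f - blinfun_apply f x\<bar>) / \<kappa>"

definition helly_gauge :: "('a::real_normed_vector \<Rightarrow>\<^sub>L real) set \<Rightarrow> real \<Rightarrow> (('a \<Rightarrow>\<^sub>L real) \<Rightarrow> real) \<Rightarrow> real"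
  where "helly_gauge I \<kappa> v = (INF x. helly_cost I \<kappa> v x)"

lemma helly_cost_nonneg: "\<kappa> > 0 \<Longrightarrow> helly_cost I \<kappa> v x \<ge> 0"
  by (simp add: helly_cost_def sum_nonneg)

lemma helly_cost_add:
  assumes "\<kappa> > 0"
  shows "helly_cost I \<kappa> (u + v) (x + y) \<le> helly_cost I \<kappa> u x + helly_cost I \<kappa> v y"
proof -
  have "(\<Sum>f\<in>I. \<bar>(u + v) f - blinfun_apply f (x + y)\<bar>)
      \<le> (\<Sum>f\<in>I. \<bar>u f - blinfun_apply f x\<bar>) + (\<Sum>f\<in>I. \<bar>v f - blinfun_apply f y\<bar>)"
    unfolding sum.distrib[symmetric] by (intro sum_mono) (simp add: blinfun.add_right)
  then have "(\<Sum>f\<in>I. \<bar>(u + v) f - blinfun_apply f (x + y)\<bar>) / \<kappa>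
      \<le> (\<Sum>f\<in>I. \<bar>u f - blinfun_apply f x\<bar>) / \<kappa> + (\<Sum>f\<in>I. \<bar>v f - blinfun_apply f y\<bar>) / \<kappa>"
    using assms by (simp add: add_divide_distrib[symmetric] divide_right_mono)
  then show ?thesis using norm_triangle_ineq[of x y] by (simp add: helly_cost_def)
qed

lemma helly_cost_scaleR:
  assumes "a \<ge> 0"
  shows "helly_cost I \<kappa> (a *\<^sub>R v) (a *\<^sub>R x) = a * helly_cost I \<kappa> v x"
proof -
  have "(\<Sum>f\<in>I. \<bar>(a *\<^sub>R v) f - blinfun_apply f (a *\<^sub>R x)\<bar>) = a * (\<Sum>f\<in>I. \<bar>v f - blinfun_apply f x\<bar>)"
    using assms by (simp add: sum_distrib_left blinfun.scaleR_right abs_mult right_diff_distrib[symmetric])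
  then show ?thesis using assms by (simp add: helly_cost_def algebra_simps)
qed

lemma helly_gauge_le: "\<kappa> > 0 \<Longrightarrow> helly_gauge I \<kappa> v \<le> helly_cost I \<kappa> v x"
  unfolding helly_gauge_def by (intro cINF_lower bdd_belowI2[where m = 0] helly_cost_nonneg) auto

lemma helly_gauge_greatest: "(\<And>x. c \<le> helly_cost I \<kappa> v x) \<Longrightarrow> c \<le> helly_gauge I \<kappa> v"
  unfolding helly_gauge_def by (intro cINF_greatest) auto

lemma helly_gauge_less:
  assumes "\<kappa> > 0" "helly_gauge I \<kappa> v < c"
  obtains x where "helly_cost I \<kappa> v x < c"
proof -
  have "bdd_below (range (helly_cost I \<kappa> v))"
    by (intro bdd_belowI2[where m = 0] helly_cost_nonneg[OF assms(1)])
  then show thesis using assms(2) that unfolding helly_gauge_def by (auto simp: cINF_less_iff)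
qed

lemma helly_gauge_sublinear:
  assumes \<kappa>: "\<kappa> > 0"
  shows "sublinear (helly_gauge I \<kappa>)"
  unfolding sublinear_def
proof (intro conjI allI impI)
  fix u v
  have shifted: "helly_gauge I \<kappa> (u + v) - helly_cost I \<kappa> v y \<le> helly_gauge I \<kappa> u" for y
  proof (rule helly_gauge_greatest)
    fix x
    show "helly_gauge I \<kappa> (u + v) - helly_cost I \<kappa> v y \<le> helly_cost I \<kappa> u x"
      using helly_gauge_le[OF \<kappa>, of I "u + v" "x + y"] helly_cost_add[OF \<kappa>, of I u v x y] by linarith
  qed
  have "helly_gauge I \<kappa> (u + v) - helly_gauge I \<kappa> u \<le> helly_gauge I \<kappa> v"
  proof (rule helly_gauge_greatest)
    fix y
    show "helly_gauge I \<kappa> (u + v) - helly_gauge I \<kappa> u \<le> helly_cost I \<kappa> v y"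
      using shifted[of y] by linarith
  qed
  then show "helly_gauge I \<kappa> (u + v) \<le> helly_gauge I \<kappa> u + helly_gauge I \<kappa> v" by simp
next
  fix a :: real and v assume "a \<ge> 0"
  show "helly_gauge I \<kappa> (a *\<^sub>R v) = a * helly_gauge I \<kappa> v"
  proof (cases "a = 0")
    case True
    have "helly_cost I \<kappa> 0 0 = 0" by (simp add: helly_cost_def)
    then have "helly_gauge I \<kappa> 0 = 0"
      using helly_gauge_le[OF \<kappa>, of I 0 0] helly_gauge_greatest[of 0 I \<kappa> 0] helly_cost_nonneg[OF \<kappa>]
      by force
    then show ?thesis using True by simp
  next
    case False
    with \<open>a \<ge> 0\<close> have a: "a > 0" by simp
    have "helly_gauge I \<kappa> (a *\<^sub>R v) / a \<le> helly_cost I \<kappa> v x" for x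
      using helly_gauge_le[OF \<kappa>, of I "a *\<^sub>R v" "a *\<^sub>R x"] helly_cost_scaleR[of a I \<kappa> v x] a
      by (simp add: divide_le_eq mult.commute)
    then have "helly_gauge I \<kappa> (a *\<^sub>R v) / a \<le> helly_gauge I \<kappa> v"
      by (rule helly_gauge_greatest)
    moreover have "a * helly_gauge I \<kappa> v \<le> helly_cost I \<kappa> (a *\<^sub>R v) x" for x
      using helly_gauge_le[OF \<kappa>, of I v "x /\<^sub>R a"] helly_cost_scaleR[of a I \<kappa> v "x /\<^sub>R a"] a by simp
    then have "a * helly_gauge I \<kappa> v \<le> helly_gauge I \<kappa> (a *\<^sub>R v)"
      by (rule helly_gauge_greatest)
    ultimately show ?thesis using a by (simp add: divide_le_eq mult.commute)
  qed
qed

text \<open>A linear functional below the gauge only depends on the values on \<open>I\<close>, so it is given by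
coefficients \<open>c\<close>; testing it on the evaluations \<open>f \<mapsto> f x\<close> shows \<open>\<Sum> c f *\<^sub>R f\<close> has norm \<open>\<le> 1\<close>.\<close>
lemma linear_below_helly_gauge:
  fixes I :: "('a::real_normed_vector \<Rightarrow>\<^sub>L real) set"
  assumes fin: "finite I" and \<kappa>: "\<kappa> > 0"
    and lin: "linear \<psi>" and below: "\<And>v. \<psi> v \<le> helly_gauge I \<kappa> v"
  obtains c where "\<And>v. \<psi> v = (\<Sum>f\<in>I. c f * v f)" "norm (\<Sum>f\<in>I. c f *\<^sub>R f) \<le> 1"
proof -
  define e where "e g = (\<lambda>f. if f = g then 1 else (0::real))" for g :: "'a \<Rightarrow>\<^sub>L real"
  define c where "c g = \<psi> (e g)" for g
  have rep: "\<psi> v = (\<Sum>f\<in>I. c f * v f)" for v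
  proof -
    define r where "r = v - (\<Sum>g\<in>I. v g *\<^sub>R e g)"
    have "r f = 0" if "f \<in> I" for f
      using that fin by (simp add: r_def sum_fun_apply e_def if_distrib sum.delta cong: if_cong)
    then have "helly_cost I \<kappa> r 0 = 0" "helly_cost I \<kappa> (- r) 0 = 0"
      by (simp_all add: helly_cost_def)
    then have "\<psi> r \<le> 0" "\<psi> (- r) \<le> 0"
      using below helly_gauge_le[OF \<kappa>] by (metis order_trans)+
    then have "\<psi> r = 0" using linear_neg[OF lin, of r] by simp
    then have "\<psi> v = \<psi> (\<Sum>g\<in>I. v g *\<^sub>R e g)" unfolding r_def using lin by (simp add: linear_diff)
    also have "\<dots> = (\<Sum>f\<in>I. c f * v f)" using lin by (simp add: linear_sum linear_scale c_def mult.commute)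
    finally show ?thesis .
  qed
  have le: "blinfun_apply (\<Sum>f\<in>I. c f *\<^sub>R f) x \<le> norm x" for x
  proof -
    have "blinfun_apply (\<Sum>f\<in>I. c f *\<^sub>R f) x = \<psi> (\<lambda>f. blinfun_apply f x)"
      by (simp add: rep blinfun.sum_left blinfun.scaleR_left)
    also have "\<dots> \<le> helly_cost I \<kappa> (\<lambda>f. blinfun_apply f x) x"
      using below helly_gauge_le[OF \<kappa>] order_trans by blast
    also have "\<dots> = norm x" by (simp add: helly_cost_def)
    finally show ?thesis .
  qed
  have "norm (\<Sum>f\<in>I. c f *\<^sub>R f) \<le> 1"
  proof (rule norm_blinfun_bound)
    show "norm (blinfun_apply (\<Sum>f\<in>I. c f *\<^sub>R f) x) \<le> 1 * norm x" for x
      using le[of x] le[of "- x"] by (simp add: blinfun.minus_right abs_le_iff)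
  qed simp
  with rep show thesis by (rule that)
qed

lemma exists_shrink_factor:
  fixes w :: "'i \<Rightarrow> real"
  assumes fin: "finite I" and \<delta>: "\<delta> > 0"
  obtains r where "0 < r" "r < 1" "\<And>i. i \<in> I \<Longrightarrow> (1 - r) * \<bar>w i\<bar> < \<delta>"
proof -
  define S where "S = (\<Sum>i\<in>I. \<bar>w i\<bar>)"
  define r where "r = (S + 1) / (S + 1 + \<delta>)"
  have S: "S \<ge> 0" by (simp add: S_def sum_nonneg)
  have "1 - r = \<delta> / (S + 1 + \<delta>)" using S \<delta> by (simp add: r_def field_simps)
  have "(1 - r) * \<bar>w i\<bar> < \<delta>" if "i \<in> I" for i
  proof -
    have "\<bar>w i\<bar> \<le> S" unfolding S_def using fin that by (intro member_le_sum) auto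
    then have "(1 - r) * \<bar>w i\<bar> \<le> \<delta> / (S + 1 + \<delta>) * S"
      unfolding \<open>1 - r = _\<close> using S \<delta> by (intro mult_left_mono) auto
    also have "\<dots> = \<delta> * (S / (S + 1 + \<delta>))" by simp
    also have "\<dots> < \<delta> * 1" using S \<delta> by (intro mult_strict_left_mono) auto
    finally show ?thesis by simp
  qed
  moreover have "0 < r" "r < 1" using S \<delta> by (auto simp: r_def)
  ultimately show thesis using that by blast
qed

lemma helly:
  fixes I :: "('a::real_normed_vector \<Rightarrow>\<^sub>L real) set" and w :: "('a \<Rightarrow>\<^sub>L real) \<Rightarrow> real"
  assumes fin: "finite I" and bound: "\<And>c. (\<Sum>f\<in>I. c f * w f) \<le> norm (\<Sum>f\<in>I. c f *\<^sub>R f)"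
    and \<eta>: "\<eta> > 0"
  obtains x where "norm x < 1" "\<And>f. f \<in> I \<Longrightarrow> \<bar>blinfun_apply f x - w f\<bar> < \<eta>"
proof -
  define \<kappa> where "\<kappa> = \<eta> / 2"
  have \<kappa>: "\<kappa> > 0" using \<eta> by (simp add: \<kappa>_def)
  have gauge: "sublinear (helly_gauge I \<kappa>)" using \<kappa> by (rule helly_gauge_sublinear)
  obtain \<psi> where lin: "linear \<psi>" and below: "\<And>v. \<psi> v \<le> helly_gauge I \<kappa> v"
    and at_w: "\<psi> w = helly_gauge I \<kappa> w"
    using sublinear_supporting_linear[OF gauge] by blast
  obtain c where "\<And>v. \<psi> v = (\<Sum>f\<in>I. c f * v f)" "norm (\<Sum>f\<in>I. c f *\<^sub>R f) \<le> 1"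
    using linear_below_helly_gauge[OF fin \<kappa> lin below] by blast
  then have w1: "helly_gauge I \<kappa> w \<le> 1" using at_w bound[of c] by (simp add: mult.commute)
  obtain r where r: "0 < r" "r < 1" and shrink: "\<And>f. f \<in> I \<Longrightarrow> (1 - r) * \<bar>w f\<bar> < \<kappa>"
    using exists_shrink_factor[OF fin \<kappa>, where w = w] by blast
  \<comment> \<open>the infimum defining the gauge need not be attained, so \<open>w\<close> is shrunk below gauge 1\<close>
  have "helly_gauge I \<kappa> (r *\<^sub>R w) = r * helly_gauge I \<kappa> w"
    using sublinear_scaleR[OF gauge, of r w] r by simp
  also have "\<dots> < 1" using w1 r by (smt (verit) mult_left_le)
  finally obtain x where "helly_cost I \<kappa> (r *\<^sub>R w) x < 1" using \<kappa> by (auto elim: helly_gauge_less)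
  then have x: "norm x + (\<Sum>f\<in>I. \<bar>r * w f - blinfun_apply f x\<bar>) / \<kappa> < 1"
    by (simp add: helly_cost_def)
  have err: "(\<Sum>f\<in>I. \<bar>r * w f - blinfun_apply f x\<bar>) / \<kappa> \<ge> 0" using \<kappa> by (simp add: sum_nonneg)
  show thesis
  proof
    show "norm x < 1" using x err by linarith
  next
    fix f assume f: "f \<in> I"
    have "\<bar>r * w f - blinfun_apply f x\<bar> \<le> (\<Sum>f\<in>I. \<bar>r * w f - blinfun_apply f x\<bar>)"
      using fin f by (intro member_le_sum) auto
    also have "\<dots> < \<kappa>"
    proof -
      have "(\<Sum>f\<in>I. \<bar>r * w f - blinfun_apply f x\<bar>) / \<kappa> < 1" using x norm_ge_zero[of x] by linarith
      then show ?thesis using \<kappa> by (simp add: divide_less_eq)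
    qed
    finally have "\<bar>r * w f - blinfun_apply f x\<bar> < \<kappa>" .
    moreover have "\<bar>blinfun_apply f x - w f\<bar> \<le> \<bar>r * w f - blinfun_apply f x\<bar> + (1 - r) * \<bar>w f\<bar>"
    proof -
      have "\<bar>r * w f - w f\<bar> = \<bar>r - 1\<bar> * \<bar>w f\<bar>" by (metis abs_mult left_diff_distrib mult_1)
      also have "\<bar>r - 1\<bar> = 1 - r" using r by simp
      finally have "\<bar>r * w f - w f\<bar> = (1 - r) * \<bar>w f\<bar>" .
      moreover have "\<bar>blinfun_apply f x - w f\<bar> \<le> \<bar>blinfun_apply f x - r * w f\<bar> + \<bar>r * w f - w f\<bar>"
        using abs_diff_triangle_ineq[of "blinfun_apply f x" "r * w f" "r * w f" "w f"] by simp
      moreover have "\<bar>blinfun_apply f x - r * w f\<bar> = \<bar>r * w f - blinfun_apply f x\<bar>" by (rule abs_minus_commute)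
      ultimately show ?thesis by linarith
    qed
    ultimately show "\<bar>blinfun_apply f x - w f\<bar> < \<eta>"
      using shrink[OF f] unfolding \<kappa>_def by linarith
  qed
qed

section \<open>Finite-dimensional subspaces\<close>

lemma closed_span_of_coefficient_bound:
  fixes B :: "'v::real_normed_vector set"
  assumes fin: "finite B" and K: "K \<ge> 0"
    and bound: "\<And>c. (\<Sum>b\<in>B. \<bar>c b\<bar>) \<le> K * norm (\<Sum>b\<in>B. c b *\<^sub>R b)"
  shows "closed (span B)"
  unfolding closed_sequential_limits
proof (intro allI impI, elim conjE)
  fix V l assume V: "\<forall>n. V n \<in> span B" and lim: "V \<longlonglongrightarrow> l"
  have "\<forall>n. \<exists>u. V n = (\<Sum>b\<in>B. u b *\<^sub>R b)" using V span_finite[OF fin] by auto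
  then obtain cs where cs: "\<And>n. V n = (\<Sum>b\<in>B. cs n b *\<^sub>R b)" by metis
  have "Cauchy (\<lambda>n. cs n b)" if b: "b \<in> B" for b
  proof (rule CauchyI)
    fix e :: real assume e: "e > 0"
    obtain M where M: "\<And>m n. m \<ge> M \<Longrightarrow> n \<ge> M \<Longrightarrow> norm (V m - V n) < e / (K + 1)"
      using CauchyD[OF LIMSEQ_imp_Cauchy[OF lim], of "e / (K + 1)"] e K by auto
    have "norm (cs m b - cs n b) < e" if "m \<ge> M" "n \<ge> M" for m n
    proof -
      have "\<bar>cs m b - cs n b\<bar> \<le> (\<Sum>b\<in>B. \<bar>cs m b - cs n b\<bar>)"
        using b fin by (intro member_le_sum) auto
      also have "\<dots> \<le> K * norm (\<Sum>b\<in>B. (cs m b - cs n b) *\<^sub>R b)" by (rule bound)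
      also have "(\<Sum>b\<in>B. (cs m b - cs n b) *\<^sub>R b) = V m - V n"
        by (simp add: cs scaleR_left_diff_distrib sum_subtractf)
      also have "K * norm (V m - V n) \<le> K * (e / (K + 1))"
        using M[OF that] K by (intro mult_left_mono) auto
      also have "\<dots> < e" using K e by (simp add: field_simps)
      finally show ?thesis by simp
    qed
    then show "\<exists>M. \<forall>m\<ge>M. \<forall>n\<ge>M. norm (cs m b - cs n b) < e" by blast
  qed
  then have "\<forall>b\<in>B. \<exists>a. (\<lambda>n. cs n b) \<longlonglongrightarrow> a" by (simp add: Cauchy_convergent_iff convergent_def)
  then obtain cl where cl: "\<And>b. b \<in> B \<Longrightarrow> (\<lambda>n. cs n b) \<longlonglongrightarrow> cl b" by metis
  have "V \<longlonglongrightarrow> (\<Sum>b\<in>B. cl b *\<^sub>R b)"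
    unfolding cs by (intro tendsto_sum tendsto_scaleR cl tendsto_const)
  then have "l = (\<Sum>b\<in>B. cl b *\<^sub>R b)" using lim LIMSEQ_unique by blast
  then show "l \<in> span B" by (auto intro: span_sum span_scale span_base)
qed

lemma norm_add_ge_of_not_in_closed_span:
  assumes "closed (span B)" "a \<notin> span B"
  obtains r where "r > 0" "\<And>v. v \<in> span B \<Longrightarrow> r \<le> norm (a + v)"
proof -
  have "open (- span B)" using assms(1) by (simp add: open_Compl)
  then obtain r where "r > 0" and r: "ball a r \<subseteq> - span B"
    using assms(2) open_contains_ball by blast
  moreover have "r \<le> norm (a + v)" if "v \<in> span B" for v
  proof -
    have "- v \<notin> ball a r" using r span_neg[OF that] by blast
    then show ?thesis by (simp add: dist_norm)
  qed
  ultimately show thesis using that by blast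
qed

lemma independent_coefficient_bound:
  fixes B :: "'v::real_normed_vector set"
  assumes "finite B" "independent B"
  shows "\<exists>K\<ge>0. \<forall>c. (\<Sum>b\<in>B. \<bar>c b\<bar>) \<le> K * norm (\<Sum>b\<in>B. c b *\<^sub>R b)"
  using assms
proof (induction B rule: finite_induct)
  case (insert a B)
  have "independent B" and a: "a \<notin> span B"
    using insert.prems insert.hyps(2) by (auto simp: independent_insert)
  then obtain K where K0: "K \<ge> 0" and K: "\<And>c. (\<Sum>b\<in>B. \<bar>c b\<bar>) \<le> K * norm (\<Sum>b\<in>B. c b *\<^sub>R b)"
    using insert.IH by blast
  obtain r where r0: "r > 0" and dist: "\<And>v. v \<in> span B \<Longrightarrow> r \<le> norm (a + v)"
    using norm_add_ge_of_not_in_closed_span[OF closed_span_of_coefficient_bound[OF insert.hyps(1) K0 K] a]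
    by blast
  define K' where "K' = 1 / r + K * (1 + norm a / r)"
  show ?case
  proof (intro exI conjI allI)
    show "K' \<ge> 0" unfolding K'_def using r0 K0 by simp
  next
    fix c :: "'v \<Rightarrow> real"
    define t where "t = c a"
    define v where "v = (\<Sum>b\<in>B. c b *\<^sub>R b)"
    define N where "N = norm (\<Sum>b\<in>insert a B. c b *\<^sub>R b)"
    have N: "N = norm (t *\<^sub>R a + v)" unfolding N_def t_def v_def using insert.hyps by simp
    have tN: "\<bar>t\<bar> \<le> N / r"
    proof (cases "t = 0")
      case False
      have "t *\<^sub>R a + v = t *\<^sub>R (a + (\<Sum>b\<in>B. (c b / t) *\<^sub>R b))"
        using False by (simp add: v_def scaleR_sum_right algebra_simps)
      then have "N = \<bar>t\<bar> * norm (a + (\<Sum>b\<in>B. (c b / t) *\<^sub>R b))" using N by simp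
      moreover have "r \<le> norm (a + (\<Sum>b\<in>B. (c b / t) *\<^sub>R b))"
        by (intro dist span_sum span_scale span_base)
      ultimately have "\<bar>t\<bar> * r \<le> N" by (simp add: mult_left_mono)
      then show ?thesis using r0 by (simp add: field_simps)
    qed (use r0 in \<open>simp add: N_def\<close>)
    have "norm v \<le> N + \<bar>t\<bar> * norm a"
      using norm_triangle_ineq4[of "t *\<^sub>R a + v" "t *\<^sub>R a"] N by simp
    also have "\<dots> \<le> N + N / r * norm a" using mult_right_mono[OF tN norm_ge_zero[of a]] by simp
    finally have vN: "norm v \<le> N * (1 + norm a / r)" by (simp add: algebra_simps)
    have "(\<Sum>b\<in>insert a B. \<bar>c b\<bar>) = \<bar>t\<bar> + (\<Sum>b\<in>B. \<bar>c b\<bar>)" using insert.hyps t_def by simp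
    also have "\<dots> \<le> N / r + K * norm v" using tN K[of c] unfolding v_def by linarith
    also have "\<dots> \<le> N / r + K * (N * (1 + norm a / r))" using vN K0 by (simp add: mult_left_mono)
    also have "\<dots> = K' * N" unfolding K'_def by (simp add: algebra_simps)
    finally show "(\<Sum>b\<in>insert a B. \<bar>c b\<bar>) \<le> K' * norm (\<Sum>b\<in>insert a B. c b *\<^sub>R b)"
      unfolding N_def .
  qed
qed auto

section \<open>Weak neighbourhoods\<close>

definition weak_cylinder :: "('a::real_normed_vector \<Rightarrow>\<^sub>L real) set \<Rightarrow> (('a \<Rightarrow>\<^sub>L real) \<Rightarrow> real) \<Rightarrow> real \<Rightarrow> 'a set"
  where "weak_cylinder I c \<delta> = {x. \<forall>f\<in>I. \<bar>blinfun_apply f x - c f\<bar> < \<delta>}"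

lemma openin_weak_cylinder:
  assumes "finite I"
  shows "openin weak_topology (weak_cylinder I c \<delta>)"
  using assms
proof (induction I rule: finite_induct)
  case empty
  have "openin weak_topology {x::'a. blinfun_apply 0 x \<in> UNIV}"
    unfolding weak_topology_def openin_topology_generated_by_iff
    by (rule generate_topology_on.Basis) blast
  then show ?case by (simp add: weak_cylinder_def)
next
  case (insert g I)
  have "openin weak_topology {x. blinfun_apply g x \<in> ball (c g) \<delta>}"
    unfolding weak_topology_def openin_topology_generated_by_iff
    by (rule generate_topology_on.Basis) blast
  from openin_Int[OF this insert.IH] show ?case
    by (rule back_subst[of "openin _"]) (auto simp: weak_cylinder_def dist_real_def abs_minus_commute)
qed

lemma weak_open_contains_cylinder:
  fixes U :: "'a::real_normed_vector set"
  assumes "openin weak_topology U" "x \<in> U"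
  obtains I \<delta> where "finite I" "\<delta> > 0" "weak_cylinder I (\<lambda>f. blinfun_apply f x) \<delta> \<subseteq> U"
proof -
  let ?P = "\<lambda>U x. \<exists>I \<delta>. finite I \<and> \<delta> > 0 \<and> weak_cylinder I (\<lambda>f. blinfun_apply f x) \<delta> \<subseteq> U"
  have "generate_topology_on {{x. blinfun_apply (f::'a \<Rightarrow>\<^sub>L real) x \<in> V} | f V. open V} U"
    using assms(1) unfolding weak_topology_def openin_topology_generated_by_iff .
  then have "\<forall>x\<in>U. ?P U x"
  proof (induction rule: generate_topology_on.induct)
    case (Int A B)
    show ?case
    proof
      fix x assume x: "x \<in> A \<inter> B"
      obtain I1 \<delta>1 where "finite I1" "\<delta>1 > 0" "weak_cylinder I1 (\<lambda>f. blinfun_apply f x) \<delta>1 \<subseteq> A"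
        using bspec[OF Int.IH(1) IntD1[OF x]] by blast
      moreover obtain I2 \<delta>2 where "finite I2" "\<delta>2 > 0" "weak_cylinder I2 (\<lambda>f. blinfun_apply f x) \<delta>2 \<subseteq> B"
        using bspec[OF Int.IH(2) IntD2[OF x]] by blast
      moreover have "weak_cylinder (I1 \<union> I2) (\<lambda>f. blinfun_apply f x) (min \<delta>1 \<delta>2)
          \<subseteq> weak_cylinder I1 (\<lambda>f. blinfun_apply f x) \<delta>1 \<inter> weak_cylinder I2 (\<lambda>f. blinfun_apply f x) \<delta>2"
        by (auto simp: weak_cylinder_def)
      ultimately have "weak_cylinder (I1 \<union> I2) (\<lambda>f. blinfun_apply f x) (min \<delta>1 \<delta>2) \<subseteq> A \<inter> B"
        by blast
      then show "?P (A \<inter> B) x" using \<open>finite I1\<close> \<open>finite I2\<close> \<open>\<delta>1 > 0\<close> \<open>\<delta>2 > 0\<close>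
        by (intro exI[of _ "I1 \<union> I2"] exI[of _ "min \<delta>1 \<delta>2"] conjI) simp_all
    qed
  next
    case (UN K)
    show ?case
    proof
      fix x assume "x \<in> \<Union>K"
      then obtain k where k: "k \<in> K" "x \<in> k" by blast
      obtain I \<delta> where "finite I" "\<delta> > 0" "weak_cylinder I (\<lambda>f. blinfun_apply f x) \<delta> \<subseteq> k"
        using bspec[OF UN.IH[OF k(1)] k(2)] by blast
      moreover have "k \<subseteq> \<Union>K" using k(1) by blast
      ultimately show "?P (\<Union>K) x" by (intro exI[of _ I] exI[of _ \<delta>] conjI) auto
    qed
  next
    case (Basis S)
    then obtain f :: "'a \<Rightarrow>\<^sub>L real" and V where S: "S = {x. blinfun_apply f x \<in> V}" and "open V"
      by blast
    show ?case
    proof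
      fix x assume "x \<in> S"
      then have "blinfun_apply f x \<in> V" by (simp add: S)
      with \<open>open V\<close> obtain e where "e > 0" and ball: "ball (blinfun_apply f x) e \<subseteq> V" by (rule openE)
      have "weak_cylinder {f} (\<lambda>f. blinfun_apply f x) e \<subseteq> S"
      proof
        fix y assume "y \<in> weak_cylinder {f} (\<lambda>f. blinfun_apply f x) e"
        then have "blinfun_apply f y \<in> ball (blinfun_apply f x) e"
          by (simp add: weak_cylinder_def dist_real_def abs_minus_commute)
        then show "y \<in> S" using ball by (auto simp: S)
      qed
      then show "?P S x" using \<open>e > 0\<close> by (intro exI[of _ "{f}"] exI[of _ e]) simp
    qed
  qed simp
  with assms(2) obtain I \<delta> where "finite I" "\<delta> > 0" "weak_cylinder I (\<lambda>f. blinfun_apply f x) \<delta> \<subseteq> U"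
    by blast
  then show thesis by (rule that)
qed

section \<open>Weak octahedrality of the dual implies the diameter 2 property\<close>

lemma abs_blinfun_apply_le_norm:
  fixes h :: "'a::real_normed_vector \<Rightarrow>\<^sub>L real"
  assumes "norm x \<le> 1"
  shows "\<bar>blinfun_apply h x\<bar> \<le> norm h"
  using norm_blinfun[of h x] mult_left_le[OF assms norm_ge_zero[of h]] by simp

lemma abs_blinfun_apply_le_norm_arg:
  fixes h :: "'a::real_normed_vector \<Rightarrow>\<^sub>L 'b::real_normed_vector"
  assumes "norm h \<le> 1"
  shows "norm (blinfun_apply h x) \<le> norm x"
  using norm_blinfun[of h x] mult_right_mono[OF assms norm_ge_zero[of x]] by simp

text \<open>Shrinking the base point to norm \<open>r < 1\<close> makes \<open>\<epsilon>\<close> in the octahedral inequality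
  affordable: a functional \<open>h\<close> that is large at \<open>x\<close> has norm larger by a factor \<open>1/r\<close>.\<close>
lemma octahedral_inequality_absorb_epsilon:
  fixes h y :: "'a::real_normed_vector \<Rightarrow>\<^sub>L real"
  assumes x: "norm x \<le> r" and r: "0 < r" "r < 1" and y: "norm y = 1" and \<epsilon>: "\<epsilon> > 0"
    and oct: "(1 - \<epsilon>) * (\<bar>blinfun_apply h x\<bar> + 1) \<le> norm (h + y)"
  shows "1 - \<epsilon> * (1 + 2 * r / (1 - r)) + \<bar>blinfun_apply h x\<bar> \<le> norm (h + y)"
proof -
  define a where "a = \<bar>blinfun_apply h x\<bar>"
  define A where "A = 2 * r / (1 - r)"
  show ?thesis
  proof (cases "a \<le> A")
    case True
    have "1 - \<epsilon> * (1 + A) + a = (1 - \<epsilon>) * (a + 1) + \<epsilon> * (a - A)" by (simp add: algebra_simps)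
    also have "\<dots> \<le> (1 - \<epsilon>) * (a + 1)" using True \<epsilon> by (simp add: mult_nonneg_nonpos)
    finally show ?thesis using oct unfolding a_def A_def by linarith
  next
    case False
    have "a \<le> norm h * r"
      using norm_blinfun[of h x] mult_left_mono[OF x norm_ge_zero[of h]] by (simp add: a_def)
    then have "a / r \<le> norm h" using r by (simp add: divide_le_eq)
    moreover have "a / r = a + a * (1 - r) / r" using r by (simp add: field_simps)
    moreover have "A * (1 - r) / r < a * (1 - r) / r" using False r by (simp add: divide_strict_right_mono)
    moreover have "A * (1 - r) / r = 2" using r by (simp add: A_def)
    ultimately have "a + 1 < norm h - 1" by linarith
    also have "norm h - 1 \<le> norm (h + y)" using norm_triangle_ineq4[of "h + y" y] y by simp
    finally have "a + 1 < norm (h + y)" .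
    moreover have "0 \<le> \<epsilon> * (1 + A)" using \<epsilon> r by (simp add: A_def)
    ultimately show ?thesis unfolding a_def A_def by linarith
  qed
qed

lemma norm_scaleR_add_ge_of_subspace:
  fixes y :: "'a::real_normed_vector \<Rightarrow>\<^sub>L real"
  assumes S: "subspace S" and x: "norm x \<le> 1"
    and H: "\<And>h. h \<in> S \<Longrightarrow> t + \<bar>blinfun_apply h x\<bar> \<le> norm (h + y)"
    and g: "g \<in> S"
  shows "\<bar>d\<bar> * t + \<bar>blinfun_apply g x\<bar> \<le> norm (d *\<^sub>R y + g)"
proof -
  have pos: "d * t + \<bar>blinfun_apply g x\<bar> \<le> norm (d *\<^sub>R y + g)" if "d > 0" "g \<in> S" for d g
  proof -
    have "t + \<bar>blinfun_apply (g /\<^sub>R d) x\<bar> \<le> norm (g /\<^sub>R d + y)"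
      by (rule H) (use S that in \<open>simp add: subspace_scale\<close>)
    moreover have "\<bar>blinfun_apply (g /\<^sub>R d) x\<bar> = \<bar>blinfun_apply g x\<bar> / d"
      using that by (simp add: blinfun.scaleR_left abs_mult field_simps)
    ultimately have "d * (t + \<bar>blinfun_apply g x\<bar> / d) \<le> d * norm (g /\<^sub>R d + y)"
      using that by (intro mult_left_mono) auto
    also have "d * norm (g /\<^sub>R d + y) = norm (d *\<^sub>R (g /\<^sub>R d + y))" using that by simp
    also have "d *\<^sub>R (g /\<^sub>R d + y) = d *\<^sub>R y + g" using that by (simp add: algebra_simps)
    finally show ?thesis using that by (simp add: distrib_left)
  qed
  show ?thesis
  proof (cases d "0::real" rule: linorder_cases)
    case equal
    then show ?thesis using abs_blinfun_apply_le_norm[OF x, of g] by simp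
  next
    case greater
    then show ?thesis using pos[OF greater g] by simp
  next
    case less
    have "(- d) * t + \<bar>blinfun_apply (- g) x\<bar> \<le> norm ((- d) *\<^sub>R y + - g)"
      using pos[of "- d" "- g"] less subspace_neg[OF S g] by simp
    also have "norm ((- d) *\<^sub>R y + - g) = norm (d *\<^sub>R y + g)"
      by (metis minus_add_distrib norm_minus_cancel scaleR_minus_left)
    finally show ?thesis using less by (simp add: blinfun.minus_left)
  qed
qed

lemma exists_near_point_with_value:
  fixes I :: "('a::real_normed_vector \<Rightarrow>\<^sub>L real) set" and y :: "'a \<Rightarrow>\<^sub>L real"
  assumes fin: "finite I" and t: "t > 0" and s: "\<bar>s\<bar> = 1" and \<eta>: "\<eta> > 0"
    and H: "\<And>d g. g \<in> span I \<Longrightarrow> \<bar>d\<bar> * t + \<bar>blinfun_apply g x\<bar> \<le> norm (d *\<^sub>R y + g)"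
  obtains u where "norm u < 1" "u \<in> weak_cylinder I (\<lambda>f. blinfun_apply f x) \<eta>"
    "\<bar>blinfun_apply y u - s * t\<bar> < \<eta>"
proof -
  have yI: "y \<notin> I"
  proof
    assume "y \<in> I"
    then have "t \<le> 0" using H[of "- y" 1] by (simp add: span_base span_neg)
    with t show False by simp
  qed
  define w where "w f = (if f = y then s * t else blinfun_apply f x)" for f
  have "\<exists>u. norm u < 1 \<and> (\<forall>f\<in>insert y I. \<bar>blinfun_apply f u - w f\<bar> < \<eta>)"
  proof (rule helly)
    show "finite (insert y I)" using fin by simp
  next
    fix c
    define g where "g = (\<Sum>f\<in>I. c f *\<^sub>R f)"
    have "(\<Sum>f\<in>I. c f * w f) = (\<Sum>f\<in>I. c f * blinfun_apply f x)"
      using yI by (intro sum.cong) (auto simp: w_def)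
    then have "(\<Sum>f\<in>insert y I. c f * w f) = c y * (s * t) + blinfun_apply g x"
      using fin yI by (simp add: w_def g_def blinfun.sum_left blinfun.scaleR_left)
    also have "\<dots> \<le> \<bar>c y\<bar> * t + \<bar>blinfun_apply g x\<bar>"
    proof -
      have "\<bar>c y * (s * t)\<bar> = \<bar>c y\<bar> * t" using s t by (simp add: abs_mult)
      then show ?thesis using abs_ge_self[of "c y * (s * t)"] abs_ge_self[of "blinfun_apply g x"] by linarith
    qed
    also have "\<dots> \<le> norm (c y *\<^sub>R y + g)" by (rule H) (simp add: g_def span_sum span_scale span_base)
    also have "c y *\<^sub>R y + g = (\<Sum>f\<in>insert y I. c f *\<^sub>R f)" using fin yI by (simp add: g_def)
    finally show "(\<Sum>f\<in>insert y I. c f * w f) \<le> norm (\<Sum>f\<in>insert y I. c f *\<^sub>R f)" .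
  qed (use \<eta> in auto)
  then obtain u where "norm u < 1" "\<forall>f\<in>insert y I. \<bar>blinfun_apply f u - w f\<bar> < \<eta>" by blast
  then show thesis using yI by (intro that) (auto simp: weak_cylinder_def w_def split: if_splits)
qed

lemma weakly_octahedral_dual_functional:
  fixes x :: "'a::real_normed_vector" and I :: "('a \<Rightarrow>\<^sub>L real) set"
  assumes WO: "weakly_octahedral TYPE('a \<Rightarrow>\<^sub>L real)"
    and fin: "finite I" and x: "norm x < 1" and t: "t < 1"
  obtains y :: "'a \<Rightarrow>\<^sub>L real" where "norm y = 1"
    "\<And>d g. g \<in> span I \<Longrightarrow> \<bar>d\<bar> * t + \<bar>blinfun_apply g x\<bar> \<le> norm (d *\<^sub>R y + g)"
proof -
  define r where "r = (1 + norm x) / 2"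
  have r: "norm x \<le> r" "0 < r" "r < 1"
    using x unfolding r_def by (auto intro: add_pos_nonneg)
  define A where "A = 2 * r / (1 - r)"
  have A: "A > 0" using r by (simp add: A_def)
  define \<epsilon> where "\<epsilon> = (1 - t) / (1 + A)"
  have \<epsilon>: "\<epsilon> > 0" using t A unfolding \<epsilon>_def by (intro divide_pos_pos) auto
  have t_eq: "t = 1 - \<epsilon> * (1 + A)" using A unfolding \<epsilon>_def by simp
  define ev where "ev = Blinfun (\<lambda>f. blinfun_apply (f::'a \<Rightarrow>\<^sub>L real) x)"
  have ev: "blinfun_apply ev f = blinfun_apply f x" for f
    unfolding ev_def by (simp add: bounded_linear_Blinfun_apply[OF blinfun.bounded_linear_left])
  have "norm ev \<le> 1"
  proof (rule norm_blinfun_bound)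
    show "norm (blinfun_apply ev f) \<le> 1 * norm f" for f
      using abs_blinfun_apply_le_norm[of x f] x by (simp add: ev)
  qed simp
  then have "\<exists>y::'a \<Rightarrow>\<^sub>L real. norm y = 1 \<and>
      (\<forall>h\<in>span I. (1 - \<epsilon>) * (\<bar>blinfun_apply ev h\<bar> + norm y) \<le> norm (h + y))"
    using WO fin \<epsilon> unfolding weakly_octahedral_def by blast
  then obtain y :: "'a \<Rightarrow>\<^sub>L real" where y: "norm y = 1"
    and "\<forall>h\<in>span I. (1 - \<epsilon>) * (\<bar>blinfun_apply ev h\<bar> + norm y) \<le> norm (h + y)"
    by blast
  then have oct: "(1 - \<epsilon>) * (\<bar>blinfun_apply h x\<bar> + 1) \<le> norm (h + y)" if "h \<in> span I" for h
    using that by (simp add: ev)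
  have "t + \<bar>blinfun_apply h x\<bar> \<le> norm (h + y)" if "h \<in> span I" for h
    unfolding t_eq A_def by (rule octahedral_inequality_absorb_epsilon[OF r y \<epsilon> oct[OF that]])
  then have "\<bar>d\<bar> * t + \<bar>blinfun_apply g x\<bar> \<le> norm (d *\<^sub>R y + g)" if "g \<in> span I" for d g
    using norm_scaleR_add_ge_of_subspace[OF subspace_span _ _ that] x by simp
  with y show thesis by (rule that)
qed

lemma weakly_octahedral_dual_far_points:
  fixes x :: "'a::real_normed_vector" and I :: "('a \<Rightarrow>\<^sub>L real) set"
  assumes WO: "weakly_octahedral TYPE('a \<Rightarrow>\<^sub>L real)"
    and fin: "finite I" and x: "norm x < 1" and \<theta>: "\<theta> > 0" and \<eta>: "\<eta> > 0"
  obtains u v where "norm u < 1" "norm v < 1"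
    "u \<in> weak_cylinder I (\<lambda>f. blinfun_apply f x) \<eta>" "v \<in> weak_cylinder I (\<lambda>f. blinfun_apply f x) \<eta>"
    "2 - \<theta> < norm (u - v)"
proof -
  define \<tau> where "\<tau> = min \<theta> 1 / 4"
  have \<tau>: "0 < \<tau>" "\<tau> < 1" "4 * \<tau> \<le> \<theta>" using \<theta> by (auto simp: \<tau>_def)
  obtain y where y: "norm y = 1"
    and H: "\<And>d g. g \<in> span I \<Longrightarrow> \<bar>d\<bar> * (1 - \<tau>) + \<bar>blinfun_apply g x\<bar> \<le> norm (d *\<^sub>R y + g)"
    using weakly_octahedral_dual_functional[OF WO fin x, of "1 - \<tau>"] \<tau> by auto
  define \<eta>' where "\<eta>' = min \<eta> \<tau>"
  have \<eta>': "0 < \<eta>'" "\<eta>' \<le> \<eta>" "\<eta>' \<le> \<tau>" using \<eta> \<tau> by (auto simp: \<eta>'_def)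
  have "1 - \<tau> > 0" using \<tau> by simp
  obtain u where u: "norm u < 1" "u \<in> weak_cylinder I (\<lambda>f. blinfun_apply f x) \<eta>'"
    and yu: "\<bar>blinfun_apply y u - 1 * (1 - \<tau>)\<bar> < \<eta>'"
    using exists_near_point_with_value[where s = 1, OF fin \<open>1 - \<tau> > 0\<close> _ \<eta>'(1) H] by auto
  obtain v where v: "norm v < 1" "v \<in> weak_cylinder I (\<lambda>f. blinfun_apply f x) \<eta>'"
    and yv: "\<bar>blinfun_apply y v - (- 1) * (1 - \<tau>)\<bar> < \<eta>'"
    using exists_near_point_with_value[where s = "- 1", OF fin \<open>1 - \<tau> > 0\<close> _ \<eta>'(1) H] by auto
  have "2 - \<theta> < blinfun_apply y (u - v)"
    using yu yv \<tau> \<eta>' by (simp add: blinfun.diff_right abs_less_iff)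
  also have "\<dots> \<le> norm (u - v)" using norm_blinfun[of y "u - v"] y by simp
  finally have "2 - \<theta> < norm (u - v)" .
  moreover have "weak_cylinder I c \<eta>' \<subseteq> weak_cylinder I c \<eta>" for c
    using \<eta>' by (auto simp: weak_cylinder_def)
  ultimately show thesis using u v that by blast
qed

lemma weak_cylinder_shrink_center:
  fixes I :: "('a::real_normed_vector \<Rightarrow>\<^sub>L real) set"
  assumes I: "finite I" and x0: "norm x0 \<le> 1" and \<delta>: "\<delta> > 0"
  obtains x where "norm x < 1"
    "weak_cylinder I (\<lambda>f. blinfun_apply f x) (\<delta> / 2) \<subseteq> weak_cylinder I (\<lambda>f. blinfun_apply f x0) \<delta>"
proof -
  have "\<delta> / 2 > 0" using \<delta> by simp
  then obtain r where r: "0 < r" "r < 1" and rI: "\<And>f. f \<in> I \<Longrightarrow> (1 - r) * \<bar>blinfun_apply f x0\<bar> < \<delta> / 2"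
    by (rule exists_shrink_factor[OF I, where w = "\<lambda>f. blinfun_apply f x0"]) auto
  define x where "x = r *\<^sub>R x0"
  have "norm x = r * norm x0" using r by (simp add: x_def)
  also have "\<dots> \<le> r" using x0 r by (intro mult_left_le) auto
  also have "\<dots> < 1" by (rule r(2))
  finally have "norm x < 1" .
  moreover have "\<bar>blinfun_apply f u - blinfun_apply f x0\<bar> < \<delta>"
    if u: "u \<in> weak_cylinder I (\<lambda>f. blinfun_apply f x) (\<delta> / 2)" and f: "f \<in> I" for u f
  proof -
    have "blinfun_apply f x - blinfun_apply f x0 = (r - 1) * blinfun_apply f x0"
      by (simp add: x_def blinfun.scaleR_right algebra_simps)
    moreover have "\<bar>r - 1\<bar> = 1 - r" using r by simp
    ultimately have "\<bar>blinfun_apply f x - blinfun_apply f x0\<bar> = (1 - r) * \<bar>blinfun_apply f x0\<bar>"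
      by (simp add: abs_mult)
    moreover have "\<bar>blinfun_apply f u - blinfun_apply f x\<bar> < \<delta> / 2"
      using u f by (simp add: weak_cylinder_def)
    ultimately show ?thesis
      using rI[OF f] abs_diff_triangle_ineq[of "blinfun_apply f u" "blinfun_apply f x" "blinfun_apply f x" "blinfun_apply f x0"]
      by simp
  qed
  ultimately show thesis by (intro that) (auto simp: weak_cylinder_def)
qed

lemma diameter_le_2_if_subset_cball:
  fixes W :: "'a::real_normed_vector set"
  assumes "W \<subseteq> cball 0 1"
  shows "diameter W \<le> 2"
proof (rule diameter_le)
  fix x y assume "x \<in> W" "y \<in> W"
  then have "norm x \<le> 1" "norm y \<le> 1" using assms by auto
  then show "norm (x - y) \<le> 2" using norm_triangle_ineq4[of x y] by linarith
qed simp

theorem diameter_two_property_if_weakly_octahedral_dual: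
  assumes WO: "weakly_octahedral TYPE('a::real_normed_vector \<Rightarrow>\<^sub>L real)"
  shows "diameter_two_property TYPE('a)"
  unfolding diameter_two_property_def
proof (intro allI impI, elim conjE)
  fix W :: "'a set"
  assume "openin (subtopology weak_topology (cball 0 1)) W" and "W \<noteq> {}"
  then obtain T x0 where T: "openin weak_topology T" "W = T \<inter> cball 0 1" and x0: "x0 \<in> W"
    unfolding openin_subtopology by blast
  obtain I \<delta> where I: "finite I" and \<delta>: "\<delta> > 0"
    and IT: "weak_cylinder I (\<lambda>f. blinfun_apply f x0) \<delta> \<subseteq> T"
    using weak_open_contains_cylinder[OF T(1)] x0 T(2) by blast
  obtain x where x: "norm x < 1"
    and shrink: "weak_cylinder I (\<lambda>f. blinfun_apply f x) (\<delta> / 2) \<subseteq> weak_cylinder I (\<lambda>f. blinfun_apply f x0) \<delta>"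
    using weak_cylinder_shrink_center[OF I _ \<delta>] x0 T(2) by auto
  have inW: "u \<in> W" if "norm u < 1" "u \<in> weak_cylinder I (\<lambda>f. blinfun_apply f x) (\<delta> / 2)" for u
    using that shrink IT T(2) by auto
  have "W \<subseteq> cball 0 1" using T(2) by blast
  then have bounded: "bounded W" and le2: "diameter W \<le> 2"
    by (auto intro: bounded_subset diameter_le_2_if_subset_cball)
  have "2 - \<theta> \<le> diameter W" if \<theta>: "\<theta> > 0" for \<theta>
  proof -
    obtain u v where "norm u < 1" "norm v < 1"
      "u \<in> weak_cylinder I (\<lambda>f. blinfun_apply f x) (\<delta> / 2)"
      "v \<in> weak_cylinder I (\<lambda>f. blinfun_apply f x) (\<delta> / 2)" and uv: "2 - \<theta> < norm (u - v)"
      using weakly_octahedral_dual_far_points[OF WO I x \<theta>, of "\<delta> / 2"] \<delta> by auto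
    then have "u \<in> W" "v \<in> W" using inW by auto
    then have "dist u v \<le> diameter W" by (rule diameter_bounded_bound[OF bounded])
    then show ?thesis using uv by (simp add: dist_norm)
  qed
  have "2 \<le> diameter W"
  proof (rule field_le_epsilon)
    show "2 \<le> diameter W + e" if "e > 0" for e :: real
      using \<open>\<And>\<theta>. \<theta> > 0 \<Longrightarrow> 2 - \<theta> \<le> diameter W\<close>[OF that] by simp
  qed
  with le2 show "diameter W = 2" by simp
qed

section \<open>The diameter 2 property implies weak octahedrality of the dual\<close>

lemma span_apply_near_bidual:
  fixes B :: "('a::real_normed_vector \<Rightarrow>\<^sub>L real) set" and \<phi> :: "('a \<Rightarrow>\<^sub>L real) \<Rightarrow>\<^sub>L real"
  assumes fin: "finite B" and K: "\<And>c. (\<Sum>b\<in>B. \<bar>c b\<bar>) \<le> K * norm (\<Sum>b\<in>B. c b *\<^sub>R b)"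
    and \<eta>: "\<eta> \<ge> 0" and z: "z \<in> span B" and x: "x \<in> weak_cylinder B (blinfun_apply \<phi>) \<eta>"
  shows "\<bar>blinfun_apply z x - blinfun_apply \<phi> z\<bar> \<le> \<eta> * K * norm z"
proof -
  obtain c where zc: "z = (\<Sum>b\<in>B. c b *\<^sub>R b)" using z span_finite[OF fin] by auto
  have "blinfun_apply z x - blinfun_apply \<phi> z = (\<Sum>b\<in>B. c b * (blinfun_apply b x - blinfun_apply \<phi> b))"
    unfolding zc by (simp add: blinfun.sum_left blinfun.sum_right blinfun.scaleR_right
        blinfun.scaleR_left right_diff_distrib sum_subtractf)
  also have "\<bar>\<dots>\<bar> \<le> (\<Sum>b\<in>B. \<bar>c b\<bar> * \<eta>)"
  proof (rule order_trans[OF sum_abs sum_mono])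
    fix b assume "b \<in> B"
    then have "\<bar>blinfun_apply b x - blinfun_apply \<phi> b\<bar> \<le> \<eta>" using x by (simp add: weak_cylinder_def less_imp_le)
    then show "\<bar>c b * (blinfun_apply b x - blinfun_apply \<phi> b)\<bar> \<le> \<bar>c b\<bar> * \<eta>"
      by (simp add: abs_mult mult_left_mono)
  qed
  also have "\<dots> = \<eta> * (\<Sum>b\<in>B. \<bar>c b\<bar>)" by (simp add: sum_distrib_left mult.commute)
  also have "\<dots> \<le> \<eta> * (K * norm z)" using K[of c] \<eta> zc by (simp add: mult_left_mono)
  finally show ?thesis by (simp add: mult.assoc)
qed

text \<open>\<open>y\<close> nearly peaks at \<open>x\<^sub>1\<close> and nearly bottoms out at \<open>x\<^sub>2\<close>, while \<open>z\<close> takes nearly the same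
  value \<open>a\<close> at both: whatever the sign of \<open>a\<close>, one of the two points sees \<open>z\<close> and \<open>y\<close> add up.\<close>
lemma norm_add_ge_of_two_points:
  fixes y z :: "'a::real_normed_vector \<Rightarrow>\<^sub>L real"
  assumes x1: "norm x1 \<le> 1" and x2: "norm x2 \<le> 1"
    and y1: "1 - \<eta> < blinfun_apply y x1" and y2: "blinfun_apply y x2 < - 1 + \<eta>"
    and z1: "\<bar>blinfun_apply z x1 - a\<bar> \<le> \<rho>" and z2: "\<bar>blinfun_apply z x2 - a\<bar> \<le> \<rho>"
  shows "\<bar>a\<bar> + 1 - \<eta> - \<rho> \<le> norm (z + y)"
proof (cases "a \<ge> 0")
  case True
  have "blinfun_apply (z + y) x1 \<le> norm (z + y)" using abs_blinfun_apply_le_norm[OF x1, of "z + y"] by simp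
  then show ?thesis using True y1 z1 by (simp add: blinfun.add_left abs_le_iff)
next
  case False
  have "- blinfun_apply (z + y) x2 \<le> norm (z + y)" using abs_blinfun_apply_le_norm[OF x2, of "z + y"] by simp
  then show ?thesis using False y2 z2 by (simp add: blinfun.add_left abs_le_iff)
qed

text \<open>For \<open>\<parallel>z\<parallel> > 2/\<epsilon>\<close> the octahedral inequality already follows from the triangle inequality.\<close>
lemma octahedral_inequality_if_small_case:
  fixes y z :: "'a::real_normed_vector"
  assumes y: "norm y = 1" and a: "\<bar>a\<bar> \<le> norm z" and \<epsilon>: "\<epsilon> > 0"
    and small: "norm z \<le> 2 / \<epsilon> \<Longrightarrow> \<bar>a\<bar> + 1 - \<epsilon> \<le> norm (z + y)"
  shows "(1 - \<epsilon>) * (\<bar>a\<bar> + norm y) \<le> norm (z + y)"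
proof (cases "norm z \<le> 2 / \<epsilon>")
  case True
  have "(1 - \<epsilon>) * (\<bar>a\<bar> + 1) \<le> \<bar>a\<bar> + 1 - \<epsilon>" using \<epsilon> by (simp add: algebra_simps)
  then show ?thesis using small[OF True] y by simp
next
  case False
  then have big: "2 \<le> \<epsilon> * norm z" using \<epsilon> by (simp add: field_simps)
  have tri: "norm z - 1 \<le> norm (z + y)" using norm_triangle_ineq4[of "z + y" y] y by simp
  show ?thesis
  proof (cases "\<epsilon> \<le> 1")
    case True
    have "(1 - \<epsilon>) * (\<bar>a\<bar> + 1) \<le> (1 - \<epsilon>) * (norm z + 1)" using True a by (intro mult_left_mono) auto
    also have "\<dots> = norm z + 1 - \<epsilon> * norm z - \<epsilon>" by (simp add: algebra_simps)
    finally show ?thesis using big tri y \<epsilon> by simp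
  next
    case False
    then have "(1 - \<epsilon>) * (\<bar>a\<bar> + norm y) \<le> 0" by (intro mult_nonpos_nonneg) auto
    then show ?thesis using norm_ge_zero[of "z + y"] by linarith
  qed
qed

lemma exists_point_near_bidual:
  fixes B :: "('a::real_normed_vector \<Rightarrow>\<^sub>L real) set" and \<phi> :: "('a \<Rightarrow>\<^sub>L real) \<Rightarrow>\<^sub>L real"
  assumes B: "finite B" and \<phi>: "norm \<phi> \<le> 1" and \<eta>: "\<eta> > 0"
  obtains x where "norm x < 1" "x \<in> weak_cylinder B (blinfun_apply \<phi>) \<eta>"
proof -
  obtain x where "norm x < 1" "\<And>f. f \<in> B \<Longrightarrow> \<bar>blinfun_apply f x - blinfun_apply \<phi> f\<bar> < \<eta>"
  proof (rule helly[OF B _ \<eta>])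
    fix c
    have "(\<Sum>f\<in>B. c f * blinfun_apply \<phi> f) = blinfun_apply \<phi> (\<Sum>f\<in>B. c f *\<^sub>R f)"
      by (simp add: blinfun.sum_right blinfun.scaleR_right)
    also have "\<dots> \<le> norm (\<Sum>f\<in>B. c f *\<^sub>R f)"
      using abs_blinfun_apply_le_norm_arg[OF \<phi>, of "\<Sum>f\<in>B. c f *\<^sub>R f"] by simp
    finally show "(\<Sum>f\<in>B. c f * blinfun_apply \<phi> f) \<le> norm (\<Sum>f\<in>B. c f *\<^sub>R f)" .
  qed (rule that)
  then show thesis by (intro that) (auto simp: weak_cylinder_def)
qed

lemma diameter_two_property_far_pair:
  fixes W :: "'a::real_normed_vector set"
  assumes D: "diameter_two_property TYPE('a)"
    and W: "openin (subtopology weak_topology (cball 0 1)) W" "W \<noteq> {}" and \<eta>: "0 < \<eta>" "\<eta> \<le> 1"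
  obtains x1 x2 and y :: "'a \<Rightarrow>\<^sub>L real" where "x1 \<in> W" "x2 \<in> W" "norm y = 1"
    "1 - \<eta> < blinfun_apply y x1" "blinfun_apply y x2 < - 1 + \<eta>"
proof -
  have "\<exists>x1\<in>W. \<exists>x2\<in>W. 2 - \<eta> < norm (x1 - x2)"
  proof (rule ccontr)
    assume "\<not> ?thesis"
    then have "diameter W \<le> 2 - \<eta>" using W(2) by (intro diameter_le) (auto simp: not_less)
    moreover have "diameter W = 2" using D W unfolding diameter_two_property_def by blast
    ultimately show False using \<eta>(1) by simp
  qed
  then obtain x1 x2 where x: "x1 \<in> W" "x2 \<in> W" and far: "2 - \<eta> < norm (x1 - x2)" by blast
  obtain y :: "'a \<Rightarrow>\<^sub>L real" where "norm y \<le> 1" and yx: "blinfun_apply y (x1 - x2) = norm (x1 - x2)"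
    using exists_norming_functional by blast
  have "W \<subseteq> cball 0 1" using openin_imp_subset[OF W(1)] by simp
  then have nx: "norm x1 \<le> 1" "norm x2 \<le> 1" using x by auto
  have "\<bar>blinfun_apply y x1\<bar> \<le> 1" "\<bar>blinfun_apply y x2\<bar> \<le> 1"
    using abs_blinfun_apply_le_norm[OF nx(1), of y] abs_blinfun_apply_le_norm[OF nx(2), of y] \<open>norm y \<le> 1\<close>
    by linarith+
  moreover have "blinfun_apply y x1 - blinfun_apply y x2 = norm (x1 - x2)"
    using yx by (simp add: blinfun.diff_right)
  ultimately have y12: "1 - \<eta> < blinfun_apply y x1" "blinfun_apply y x2 < - 1 + \<eta>"
    using far unfolding abs_le_iff by linarith+
  have "norm (x1 - x2) \<le> norm y * norm (x1 - x2)" using norm_blinfun[of y "x1 - x2"] yx by simp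
  moreover have "0 < norm (x1 - x2)" using far \<eta>(2) by linarith
  ultimately have "norm y = 1" using \<open>norm y \<le> 1\<close> by (simp add: mult_le_cancel_right1)
  with x y12 show thesis by (intro that)
qed

theorem weakly_octahedral_dual_if_diameter_two_property:
  assumes D: "diameter_two_property TYPE('a::real_normed_vector)"
  shows "weakly_octahedral TYPE('a \<Rightarrow>\<^sub>L real)"
  unfolding weakly_octahedral_def
proof (intro allI impI)
  fix F :: "('a \<Rightarrow>\<^sub>L real) set" and \<phi> :: "('a \<Rightarrow>\<^sub>L real) \<Rightarrow>\<^sub>L real" and \<epsilon> :: real
  assume "finite F" and \<phi>: "norm \<phi> \<le> 1" and \<epsilon>: "\<epsilon> > 0"
  obtain B where "B \<subseteq> F" "independent B" and FB: "F \<subseteq> span B"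
    using maximal_independent_subset[of F] by blast
  then have B: "finite B" using \<open>finite F\<close> finite_subset by blast
  have spanF: "span F \<subseteq> span B" using span_mono[OF FB] by (simp add: span_span)
  obtain K where K0: "K \<ge> 0" and K: "\<And>c. (\<Sum>b\<in>B. \<bar>c b\<bar>) \<le> K * norm (\<Sum>b\<in>B. c b *\<^sub>R b)"
    using independent_coefficient_bound[OF B \<open>independent B\<close>] by blast
  define L where "L = 1 + K * (2 / \<epsilon>)"
  have L: "L > 0" using K0 \<epsilon> by (simp add: L_def add_pos_nonneg)
  define \<eta> where "\<eta> = min 1 (\<epsilon> / L)"
  have \<eta>: "0 < \<eta>" "\<eta> \<le> 1" using \<epsilon> L by (auto simp: \<eta>_def)
  have "\<eta> * L \<le> \<epsilon> / L * L" using L by (intro mult_right_mono) (auto simp: \<eta>_def)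
  then have \<eta>L: "\<eta> * L \<le> \<epsilon>" using L by simp
  define W where "W = weak_cylinder B (blinfun_apply \<phi>) \<eta> \<inter> cball 0 1"
  have Wo: "openin (subtopology weak_topology (cball 0 1)) W"
    unfolding openin_subtopology W_def using openin_weak_cylinder[OF B] by blast
  obtain x0 where "norm x0 < 1" "x0 \<in> weak_cylinder B (blinfun_apply \<phi>) \<eta>"
    by (rule exists_point_near_bidual[OF B \<phi> \<eta>(1)])
  then have "x0 \<in> W" by (simp add: W_def)
  then have Wne: "W \<noteq> {}" by blast
  obtain x1 x2 y where x: "x1 \<in> W" "x2 \<in> W" and y: "norm y = 1"
    and y12: "1 - \<eta> < blinfun_apply y x1" "blinfun_apply y x2 < - 1 + \<eta>"
    by (rule diameter_two_property_far_pair[OF D Wo Wne \<eta>])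
  have nx: "norm x1 \<le> 1" "norm x2 \<le> 1" using x by (auto simp: W_def)
  have "(1 - \<epsilon>) * (\<bar>blinfun_apply \<phi> z\<bar> + norm y) \<le> norm (z + y)" if "z \<in> span F" for z
  proof (rule octahedral_inequality_if_small_case[OF y _ \<epsilon>])
    show "\<bar>blinfun_apply \<phi> z\<bar> \<le> norm z"
      using abs_blinfun_apply_le_norm_arg[OF \<phi>, of z] by simp
    assume "norm z \<le> 2 / \<epsilon>"
    then have "\<eta> * K * norm z \<le> \<eta> * K * (2 / \<epsilon>)" using \<eta> K0 by (intro mult_left_mono) auto
    then have \<rho>: "\<eta> + \<eta> * K * norm z \<le> \<epsilon>" using \<eta>L by (simp add: L_def algebra_simps)
    have "z \<in> span B" using that spanF by blast
    have close: "\<bar>blinfun_apply z xi - blinfun_apply \<phi> z\<bar> \<le> \<eta> * K * norm z" if "xi \<in> W" for xi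
      by (rule span_apply_near_bidual[OF B K _ \<open>z \<in> span B\<close>]) (use that \<eta>(1) in \<open>auto simp: W_def\<close>)
    have "\<bar>blinfun_apply \<phi> z\<bar> + 1 - \<eta> - \<eta> * K * norm z \<le> norm (z + y)"
      by (rule norm_add_ge_of_two_points[OF nx y12 close[OF x(1)] close[OF x(2)]])
    then show "\<bar>blinfun_apply \<phi> z\<bar> + 1 - \<epsilon> \<le> norm (z + y)" using \<rho> by linarith
  qed
  with y show "\<exists>y. norm y = 1 \<and> (\<forall>z\<in>span F. (1 - \<epsilon>) * (\<bar>blinfun_apply \<phi> z\<bar> + norm y) \<le> norm (z + y))"
    by blast
qed

theorem theorem3p4:
  assumes "\<exists>x::'a::banach. x \<noteq> 0"
  shows "diameter_two_property TYPE('a) \<longleftrightarrow> weakly_octahedral TYPE('a \<Rightarrow>\<^sub>L real)"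
  using diameter_two_property_if_weakly_octahedral_dual[where 'a = 'a]
    weakly_octahedral_dual_if_diameter_two_property[where 'a = 'a]
  by blast

end
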